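(* Let $p\in\mathcal H(3,d)$ with $p(x_1,x_2,x_3)=a(x_1,x_2)+x_3\,b(x_1,x_2)$ for polynomials $a,b$. Suppose two monomials $m_1,m_2$ in the variables $x_1,x_2$ only, both of degree $d$, occur in $p$ and satisfy $\delta(m_1,m_2)\ge 4$. Then $p$ has at least $d+1$ distinct monomials that depend on $x_3$.
   Context: $\mathcal H(3,d)$ is the set of real polynomials in $x_1,x_2,x_3$ of total degree exactly $d$, with all coefficients nonnegative, such that $p(x)=1$ whenever $x_1+x_2+x_3=1$. For monomials $m_1=x_1^{\alpha_1}\cdots x_n^{\alpha_n}$ and $m_2=x_1^{\beta_1}\cdots x_n^{\beta_n}$, $\delta(m_1,m_2)=\sum_j|\alpha_j-\beta_j|$. *)

theory Defs
  imports Complex_Main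
begin

text \<open>A real polynomial in x1,x2,x3 is represented by its coefficient function on
exponent triples (a1,a2,a3), required to have finite support.\<close>

type_synonym mono3 = "nat \<times> nat \<times> nat"

definition e1 :: "mono3 \<Rightarrow> nat" where "e1 \<alpha> = fst \<alpha>"
definition e2 :: "mono3 \<Rightarrow> nat" where "e2 \<alpha> = fst (snd \<alpha>)"
definition e3 :: "mono3 \<Rightarrow> nat" where "e3 \<alpha> = snd (snd \<alpha>)"

definition mdeg :: "mono3 \<Rightarrow> nat" where "mdeg \<alpha> = e1 \<alpha> + e2 \<alpha> + e3 \<alpha>"

definition supp3 :: "(mono3 \<Rightarrow> real) \<Rightarrow> mono3 set" where
  "supp3 c = {\<alpha>. c \<alpha> \<noteq> 0}"

definition eval3 :: "(mono3 \<Rightarrow> real) \<Rightarrow> real \<Rightarrow> real \<Rightarrow> real \<Rightarrow> real" where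
  "eval3 c x1 x2 x3 = (\<Sum>\<alpha>\<in>supp3 c. c \<alpha> * x1 ^ e1 \<alpha> * x2 ^ e2 \<alpha> * x3 ^ e3 \<alpha>)"

definition delta3 :: "mono3 \<Rightarrow> mono3 \<Rightarrow> nat" where
  "delta3 \<alpha> \<beta> = nat \<bar>int (e1 \<alpha>) - int (e1 \<beta>)\<bar> + nat \<bar>int (e2 \<alpha>) - int (e2 \<beta>)\<bar>
                  + nat \<bar>int (e3 \<alpha>) - int (e3 \<beta>)\<bar>"

definition H3 :: "nat \<Rightarrow> (mono3 \<Rightarrow> real) \<Rightarrow> bool" where
  "H3 d c \<longleftrightarrow> finite (supp3 c)
     \<and> (\<forall>\<alpha>. c \<alpha> \<ge> 0)
     \<and> (\<forall>\<alpha>\<in>supp3 c. mdeg \<alpha> \<le> d) \<and> (\<exists>\<alpha>\<in>supp3 c. mdeg \<alpha> = d)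
     \<and> (\<forall>x1 x2 x3. x1 + x2 + x3 = 1 \<longrightarrow> eval3 c x1 x2 x3 = 1)"

end

theory Submission
  imports Defs
begin

text \<open>Since p = 1 on the plane z = 1 - x - y, the polynomial
identity a + (1 - x - y) b = 1 holds, i.e. a + b = (x + y) b + 1 coefficientwise. With
nonnegative coefficients, every monomial of a + b of positive degree n forces a monomial of b
of degree n - 1 obtained by lowering one exponent. Descending from a degree-d monomial of a
hits every degree below d, and the two monomials m1, m2, whose x-exponents differ by at least
2, force two different monomials of b of degree d - 1: that makes d + 1 monomials of z b.\<close>

definition poly2 :: "(nat \<Rightarrow> nat \<Rightarrow> real) \<Rightarrow> nat \<Rightarrow> real \<Rightarrow> real \<Rightarrow> real" where
  "poly2 G N x y = (\<Sum>i\<le>N. \<Sum>j\<le>N. G i j * x ^ i * y ^ j)"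

definition mult_x_plus_y :: "(nat \<Rightarrow> nat \<Rightarrow> real) \<Rightarrow> nat \<Rightarrow> nat \<Rightarrow> real" where
  "mult_x_plus_y b i j = (if 0 < i then b (i - 1) j else 0) + (if 0 < j then b i (j - 1) else 0)"

lemma poly2_eq_0_imp_coeff_eq_0:
  assumes zero: "\<And>x y. poly2 G N x y = 0" and "i \<le> N" "j \<le> N"
  shows "G i j = 0"
proof -
  have "(\<Sum>j\<le>N. G i j * y ^ j) = 0" for y
  proof -
    have "(\<Sum>i\<le>N. (\<Sum>j\<le>N. G i j * y ^ j) * x ^ i) = poly2 G N x y" for x
      unfolding poly2_def sum_distrib_right by (intro sum.cong refl) (simp add: mult_ac)
    then have "\<forall>x. (\<Sum>i\<le>N. (\<Sum>j\<le>N. G i j * y ^ j) * x ^ i) = 0"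
      using zero by simp
    then show ?thesis
      using \<open>i \<le> N\<close> by (simp only: polyfun_eq_0)
  qed
  then have "\<forall>y. (\<Sum>j\<le>N. G i j * y ^ j) = 0" by simp
  then show ?thesis
    using \<open>j \<le> N\<close> by (simp only: polyfun_eq_0)
qed

lemma poly2_Suc:
  assumes "\<And>i j. N < i \<or> N < j \<Longrightarrow> G i j = 0"
  shows "poly2 G (Suc N) x y = poly2 G N x y"
  using assms by (simp add: poly2_def sum.atMost_Suc)

lemma poly2_one: "poly2 (\<lambda>i j. if i = 0 \<and> j = 0 then 1 else 0) N x y = 1"
  by (simp add: poly2_def sum.atMost_shift)

lemma poly2_mult_x_plus_y:
  assumes vanish: "\<And>i j. N < i \<or> N < j \<Longrightarrow> b i j = 0"
  shows "poly2 (mult_x_plus_y b) (Suc N) x y = (x + y) * poly2 b N x y"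
proof -
  have x_shift: "(\<Sum>i\<le>Suc N. \<Sum>j\<le>M. (if 0 < i then b (i - 1) j else 0) * x ^ i * y ^ j)
      = x * (\<Sum>i\<le>N. \<Sum>j\<le>M. b i j * x ^ i * y ^ j)" for M
    by (simp only: sum.atMost_Suc_shift) (simp add: sum_distrib_left mult_ac)
  have y_shift: "(\<Sum>i\<le>M. \<Sum>j\<le>Suc N. (if 0 < j then b i (j - 1) else 0) * x ^ i * y ^ j)
      = y * (\<Sum>i\<le>M. \<Sum>j\<le>N. b i j * x ^ i * y ^ j)" for M
    by (simp only: sum.atMost_Suc_shift) (simp add: sum_distrib_left mult_ac)
  have "(\<Sum>i\<le>N. \<Sum>j\<le>Suc N. b i j * x ^ i * y ^ j) = poly2 b N x y"
    and "(\<Sum>i\<le>Suc N. \<Sum>j\<le>N. b i j * x ^ i * y ^ j) = poly2 b N x y"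
    using vanish by (simp_all add: poly2_def sum.atMost_Suc)
  then show ?thesis
    using x_shift[of "Suc N"] y_shift[of "Suc N"]
    by (simp add: poly2_def mult_x_plus_y_def distrib_right sum.distrib)
qed

lemma coeff_recurrence:
  assumes a_vanish: "\<And>i j. N < i \<or> N < j \<Longrightarrow> a i j = 0"
    and b_vanish: "\<And>i j. N < i \<or> N < j \<Longrightarrow> b i j = 0"
    and identity: "\<And>x y. poly2 a N x y + (1 - x - y) * poly2 b N x y = 1"
  shows "a i j + b i j = mult_x_plus_y b i j + (if i = 0 \<and> j = 0 then 1 else 0)"
proof (cases "i \<le> Suc N \<and> j \<le> Suc N")
  case True
  define F where
    "F i j = a i j + b i j - mult_x_plus_y b i j - (if i = 0 \<and> j = 0 then 1 else 0)" for i j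
  have "poly2 F (Suc N) x y = 0" for x y
  proof -
    have "poly2 F (Suc N) x y = poly2 a (Suc N) x y + poly2 b (Suc N) x y
        - poly2 (mult_x_plus_y b) (Suc N) x y - 1"
      using poly2_one[of "Suc N" x y]
      by (simp add: F_def poly2_def algebra_simps sum.distrib sum_subtractf)
    also have "\<dots> = poly2 a N x y + (1 - x - y) * poly2 b N x y - 1"
      using poly2_Suc[of N a, OF a_vanish] poly2_Suc[of N b, OF b_vanish]
        poly2_mult_x_plus_y[of N b, OF b_vanish]
      by (simp add: algebra_simps)
    finally show ?thesis
      using identity by simp
  qed
  then show ?thesis
    using poly2_eq_0_imp_coeff_eq_0[of F "Suc N" i j] True by (simp add: F_def)
next
  case False
  then have "a i j = 0" "b i j = 0" "b (i - 1) j = 0" "b i (j - 1) = 0"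
    by (auto intro!: a_vanish b_vanish)
  then show ?thesis
    using False by (auto simp: mult_x_plus_y_def)
qed

locale nonneg_coeff_recurrence =
  fixes a b :: "nat \<Rightarrow> nat \<Rightarrow> real"
  assumes a_nonneg: "0 \<le> a i j"
    and b_nonneg: "0 \<le> b i j"
    and recurrence: "a i j + b i j = mult_x_plus_y b i j + (if i = 0 \<and> j = 0 then 1 else 0)"
begin

lemma positive_predecessor:
  assumes "0 < a i j + b i j" and "0 < i + j"
  shows "\<exists>p q. p + q + 1 = i + j \<and> p \<le> i \<and> i \<le> p + 1 \<and> 0 < b p q"
proof -
  have "0 < mult_x_plus_y b i j"
    using recurrence[of i j] assms by auto
  then have "0 < i \<and> 0 < b (i - 1) j \<or> 0 < j \<and> 0 < b i (j - 1)"
    using b_nonneg[of "i - 1" j] b_nonneg[of i "j - 1"]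
    unfolding mult_x_plus_y_def by (smt (verit))
  then show ?thesis
  proof
    assume "0 < i \<and> 0 < b (i - 1) j"
    then show ?thesis by (intro exI[of _ "i - 1"] exI[of _ j]) auto
  next
    assume "0 < j \<and> 0 < b i (j - 1)"
    then show ?thesis by (intro exI[of _ i] exI[of _ "j - 1"]) auto
  qed
qed

lemma positive_on_lower_levels:
  assumes "0 < a i j + b i j" and "k < i + j"
  shows "\<exists>p q. p + q = k \<and> 0 < b p q"
proof -
  have "\<exists>p q. p + q = k \<and> 0 < b p q" if "0 < a i j + b i j" "i + j = k + 1 + m" for i j m
    using that
  proof (induction m arbitrary: i j)
    case 0
    then show ?case
      using positive_predecessor[of i j] by fastforce
  next
    case (Suc m)
    then obtain p q where "p + q = k + 1 + m" "0 < b p q"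
      using positive_predecessor[of i j] by fastforce
    moreover have "0 < a p q + b p q"
      using \<open>0 < b p q\<close> a_nonneg[of p q] by linarith
    ultimately show ?case
      using Suc.IH by blast
  qed
  moreover obtain m where "i + j = k + 1 + m"
    using assms(2) by (metis less_imp_Suc_add add.commute add_Suc_right Suc_eq_plus1)
  ultimately show ?thesis
    using assms(1) by blast
qed

lemma card_positive_below_level:
  assumes "0 < a i1 j1" "0 < a i2 j2" "i1 + j1 = n" "i2 + j2 = n" "i1 + 2 \<le> i2"
  shows "n + 1 \<le> card {(p, q). p + q < n \<and> 0 < b p q}"
proof -
  define level where "level k = {(p, q). p + q = k \<and> 0 < b p q}" for k
  have finite_level: "finite (level k)" for k
    by (rule finite_subset[of _ "{..k} \<times> {..k}"]) (auto simp: level_def)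
  have level_disjoint: "level k \<inter> level l = {}" if "k \<noteq> l" for k l
    using that by (auto simp: level_def)
  have "level k \<noteq> {}" if "k < n" for k
    using positive_on_lower_levels[of i1 j1 k] assms(1,3) that b_nonneg[of i1 j1]
    by (auto simp: level_def)
  then have level_ge_1: "1 \<le> card (level k)" if "k < n" for k
    using that finite_level by (simp add: Suc_le_eq card_gt_0_iff)
  have "0 < a i1 j1 + b i1 j1" "0 < i1 + j1"
    using assms b_nonneg[of i1 j1] by linarith+
  then obtain p1 q1 where 1: "p1 + q1 + 1 = n" "p1 \<le> i1" "0 < b p1 q1"
    using positive_predecessor assms(3) by blast
  have "0 < a i2 j2 + b i2 j2" "0 < i2 + j2"
    using assms b_nonneg[of i2 j2] by linarith+
  then obtain p2 q2 where 2: "p2 + q2 + 1 = n" "i2 \<le> p2 + 1" "0 < b p2 q2"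
    using positive_predecessor assms(4) by blast
  have "card {(p1, q1), (p2, q2)} \<le> card (level (n - 1))"
    using 1 2 finite_level by (intro card_mono) (auto simp: level_def)
  then have level_top_ge_2: "2 \<le> card (level (n - 1))"
    using 1(2) 2(2) assms(5) by simp
  obtain m where n: "n = Suc m"
    using 1(1) by (intro that[of "p1 + q1"]) simp
  have "{(p, q). p + q < n \<and> 0 < b p q} = (\<Union>k<n. level k)"
    by (auto simp: level_def)
  then have "card {(p, q). p + q < n \<and> 0 < b p q} = (\<Sum>k<n. card (level k))"
    using card_UN_disjoint[of "{..<n}" level] finite_level level_disjoint by simp
  then have "card {(p, q). p + q < n \<and> 0 < b p q} = card (level m) + (\<Sum>k<m. card (level k))"
    by (simp add: n)
  moreover have "m \<le> (\<Sum>k<m. card (level k))"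
    using sum_mono[of "{..<m}" "\<lambda>_. 1" "\<lambda>k. card (level k)"] level_ge_1 n by simp
  ultimately show ?thesis
    using level_top_ge_2 n by simp
qed

end

lemma eval3_eq_poly2:
  assumes fin: "finite (supp3 c)" and e3_le_1: "\<forall>\<alpha>\<in>supp3 c. e3 \<alpha> \<le> 1"
    and deg_le: "\<forall>\<alpha>\<in>supp3 c. mdeg \<alpha> \<le> d"
  shows "eval3 c x y z = poly2 (\<lambda>i j. c (i, j, 0)) d x y + z * poly2 (\<lambda>i j. c (i, j, 1)) d x y"
proof -
  let ?box = "{..d} \<times> {..d} \<times> {..1::nat}"
  let ?term = "\<lambda>\<alpha>. c \<alpha> * x ^ e1 \<alpha> * y ^ e2 \<alpha> * z ^ e3 \<alpha>"
  have "supp3 c \<subseteq> ?box"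
  proof
    fix \<alpha> assume "\<alpha> \<in> supp3 c"
    then show "\<alpha> \<in> ?box"
      using deg_le e3_le_1 by (cases \<alpha>) (auto simp: mdeg_def e1_def e2_def e3_def)
  qed
  then have "eval3 c x y z = sum ?term ?box"
    unfolding eval3_def by (intro sum.mono_neutral_left) (auto simp: supp3_def)
  also have "\<dots> = (\<Sum>i\<le>d. \<Sum>j\<le>d. \<Sum>k\<le>1. ?term (i, j, k))"
    by (simp only: sum.cartesian_product case_prod_beta' prod.collapse)
  also have "\<dots> = (\<Sum>i\<le>d. \<Sum>j\<le>d. c (i, j, 0) * x ^ i * y ^ j + z * (c (i, j, 1) * x ^ i * y ^ j))"
    by (simp add: e1_def e2_def e3_def mult_ac)
  also have "\<dots> = poly2 (\<lambda>i j. c (i, j, 0)) d x y + z * poly2 (\<lambda>i j. c (i, j, 1)) d x y"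
    by (simp only: poly2_def sum.distrib sum_distrib_left)
  finally show ?thesis .
qed

theorem lemma8:
  fixes d :: nat and c :: "mono3 \<Rightarrow> real" and m1 m2 :: mono3
  assumes "H3 d c"
    and "\<forall>\<alpha>\<in>supp3 c. e3 \<alpha> \<le> 1"
    and "m1 \<in> supp3 c" and "m2 \<in> supp3 c"
    and "e3 m1 = 0" and "e3 m2 = 0"
    and "mdeg m1 = d" and "mdeg m2 = d"
    and "delta3 m1 m2 \<ge> 4"
  shows "card {\<alpha>\<in>supp3 c. e3 \<alpha> \<ge> 1} \<ge> d + 1"
proof -
  have fin: "finite (supp3 c)" and nonneg: "\<And>\<alpha>. 0 \<le> c \<alpha>"
    and deg_le: "\<forall>\<alpha>\<in>supp3 c. mdeg \<alpha> \<le> d"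
    and on_simplex: "\<And>x y z. x + y + z = 1 \<Longrightarrow> eval3 c x y z = 1"
    using assms(1) unfolding H3_def by auto
  define a where "a i j = c (i, j, 0)" for i j
  define b where "b i j = c (i, j, 1)" for i j
  have vanish: "c (i, j, k) = 0" if "d < i + j + k" for i j k
    using deg_le that by (force simp: supp3_def mdeg_def e1_def e2_def e3_def)
  have identity: "poly2 a d x y + (1 - x - y) * poly2 b d x y = 1" for x y
    unfolding a_def b_def
    using eval3_eq_poly2[OF fin assms(2) deg_le, of x y "1 - x - y"] on_simplex[of x y "1 - x - y"]
    by simp
  have "d < i \<or> d < j \<Longrightarrow> a i j = 0" "d < i \<or> d < j \<Longrightarrow> b i j = 0" for i j
    by (auto simp: a_def b_def intro!: vanish)
  then interpret nonneg_coeff_recurrence a b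
    using coeff_recurrence[OF _ _ identity] by unfold_locales (auto simp: a_def b_def nonneg)
  obtain i1 j1 i2 j2 where m1: "m1 = (i1, j1, 0)" and m2: "m2 = (i2, j2, 0)"
    using assms(5,6) by (cases m1, cases m2) (auto simp: e3_def)
  have deg: "i1 + j1 = d" "i2 + j2 = d"
    using assms(7,8) by (simp_all add: m1 m2 mdeg_def e1_def e2_def e3_def)
  have "nat \<bar>int i1 - int i2\<bar> + nat \<bar>int j1 - int j2\<bar> \<ge> 4"
    using assms(9) by (simp add: m1 m2 delta3_def e1_def e2_def e3_def)
  then have far: "i1 + 2 \<le> i2 \<or> i2 + 2 \<le> i1"
    using deg by linarith
  have pos: "0 < a i1 j1" "0 < a i2 j2"
    using assms(3,4) nonneg[of m1] nonneg[of m2] by (auto simp: m1 m2 a_def supp3_def)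
  have "d + 1 \<le> card {(p, q). p + q < d \<and> 0 < b p q}"
    using far card_positive_below_level[OF pos deg] card_positive_below_level[OF pos(2,1) deg(2,1)]
    by blast
  also have "\<dots> \<le> card {\<alpha>\<in>supp3 c. 1 \<le> e3 \<alpha>}"
    by (rule card_inj_on_le[where f = "\<lambda>(p, q). (p, q, 1)"])
      (use fin in \<open>auto simp: inj_on_def b_def supp3_def e3_def\<close>)
  finally show ?thesis .
qed

end
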